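(* Let $t$ be a positive integer, $s\ge 2$, and let $G=K(n_1,\dots,n_s)$ be a complete $s$-partite graph with parts $V_1,\dots,V_s$, $|V_j|=n_j$. Let $f$ be a $t$-relaxed coloring of $G$. If a color $i$ appears on exactly $r\ge 2$ parts of $G$ (i.e. exactly $r$ parts contain a vertex $v$ with $f(v)=i$), then $|f^{-1}(i)|\le t+\left\lfloor \frac{t}{r-1}\right\rfloor$.
   Context: $K(n_1,\dots,n_s)$ denotes the complete $s$-partite graph whose parts have $n_1,\dots,n_s\ge 1$ vertices. A map $f$ from $V(G)$ to a finite set of colors is a $t$-relaxed coloring if every vertex $u$ has at most $t$ neighbors $v$ with $f(v)=f(u)$. $f^{-1}(i)$ is the set of vertices receiving color $i$. *)

theory Defs
  imports Main
begin

definition cmp_parts :: "nat \<Rightarrow> (nat \<Rightarrow> 'a set) \<Rightarrow> bool" where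
  "cmp_parts s V \<longleftrightarrow>
     (\<forall>j<s. finite (V j) \<and> V j \<noteq> {}) \<and>
     (\<forall>j<s. \<forall>k<s. j \<noteq> k \<longrightarrow> V j \<inter> V k = {})"

definition cmp_vertices :: "nat \<Rightarrow> (nat \<Rightarrow> 'a set) \<Rightarrow> 'a set" where
  "cmp_vertices s V = (\<Union>j<s. V j)"

definition cmp_adj :: "nat \<Rightarrow> (nat \<Rightarrow> 'a set) \<Rightarrow> 'a \<Rightarrow> 'a \<Rightarrow> bool" where
  "cmp_adj s V u v \<longleftrightarrow>
     u \<in> cmp_vertices s V \<and> v \<in> cmp_vertices s V \<and>
     (\<forall>j<s. \<not> (u \<in> V j \<and> v \<in> V j))"

definition relaxed_coloring ::
    "'a set \<Rightarrow> ('a \<Rightarrow> 'a \<Rightarrow> bool) \<Rightarrow> nat \<Rightarrow> ('a \<Rightarrow> 'c) \<Rightarrow> bool" where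
  "relaxed_coloring Vs adj t f \<longleftrightarrow>
     (\<forall>u\<in>Vs. card {v\<in>Vs. adj u v \<and> f v = f u} \<le> t)"

end

theory Submission
  imports Defs
begin

text \<open>Let \<open>C\<close> be the colour class of \<open>i\<close> and \<open>A\<^sub>j = C \<inter> V\<^sub>j\<close> its trace on each of the
  \<open>r\<close> parts it meets. A vertex of \<open>A\<^sub>j\<close> is adjacent to every vertex of \<open>C - A\<^sub>j\<close>, so
  \<open>|C| - |A\<^sub>j| \<le> t\<close>. Summing over the \<open>r\<close> parts gives \<open>(r - 1) |C| \<le> r t\<close>, that is
  \<open>(r - 1) (|C| - t) \<le> t\<close>.\<close>

lemma cmp_adj_iff:
  assumes "cmp_parts s V" and "j < s" and "u \<in> V j"
  shows "cmp_adj s V u w \<longleftrightarrow> w \<in> cmp_vertices s V \<and> w \<notin> V j"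
  using assms unfolding cmp_parts_def cmp_adj_def cmp_vertices_def by blast

lemma card_colour_class_Diff_part_le:
  assumes "cmp_parts s V" and "relaxed_coloring (cmp_vertices s V) (cmp_adj s V) t f"
    and "j < s" and "u \<in> V j"
  shows "card ({w \<in> cmp_vertices s V. f w = f u} - V j) \<le> t"
proof -
  have u: "u \<in> cmp_vertices s V"
    using assms(3,4) unfolding cmp_vertices_def by blast
  have "{w \<in> cmp_vertices s V. cmp_adj s V u w \<and> f w = f u}
      = {w \<in> cmp_vertices s V. f w = f u} - V j"
    using cmp_adj_iff[OF assms(1,3,4)] by blast
  with assms(2) u show ?thesis
    unfolding relaxed_coloring_def by metis
qed

lemma sum_card_UN_diff_card:
  assumes "finite J" and "\<And>j. j \<in> J \<Longrightarrow> finite (A j)"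
    and "\<And>j k. j \<in> J \<Longrightarrow> k \<in> J \<Longrightarrow> j \<noteq> k \<Longrightarrow> A j \<inter> A k = {}"
  shows "(\<Sum>j\<in>J. card (\<Union>(A ` J)) - card (A j)) = (card J - 1) * card (\<Union>(A ` J))"
proof -
  let ?N = "card (\<Union>(A ` J))"
  have "?N = (\<Sum>j\<in>J. card (A j))"
    using assms by (simp add: card_UN_disjoint)
  moreover have "\<And>j. j \<in> J \<Longrightarrow> card (A j) \<le> ?N"
    using assms(1,2) by (intro card_mono) auto
  ultimately have "(\<Sum>j\<in>J. ?N - card (A j)) = card J * ?N - ?N"
    by (simp add: sum_subtractf_nat)
  also have "\<dots> = (card J - 1) * ?N"
    by (simp add: diff_mult_distrib)
  finally show ?thesis .
qed

lemma le_add_div_if_pred_mult_le: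
  fixes r N t :: nat
  assumes "r \<ge> 2" and "(r - 1) * N \<le> r * t"
  shows "N \<le> t + t div (r - 1)"
proof -
  have "r * t = (r - 1) * t + t"
    using assms(1) by (cases r) auto
  with assms(2) have "(N - t) * (r - 1) \<le> t"
    by (simp add: diff_mult_distrib mult.commute)
  then have "N - t \<le> t div (r - 1)"
    using assms(1) by (simp add: less_eq_div_iff_mult_less_eq)
  then show ?thesis by simp
qed

lemma colour_class_card_bound:
  fixes i :: 'c
  assumes "cmp_parts s V" and "relaxed_coloring (cmp_vertices s V) (cmp_adj s V) t f"
  defines "r \<equiv> card {j. j < s \<and> (\<exists>v\<in>V j. f v = i)}"
  shows "(r - 1) * card {v \<in> cmp_vertices s V. f v = i} \<le> r * t"
proof -
  define C where "C = {v \<in> cmp_vertices s V. f v = i}"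
  define J where "J = {j. j < s \<and> (\<exists>v\<in>V j. f v = i)}"
  define A where "A j = C \<inter> V j" for j
  have "card J = r" "finite J"
    unfolding r_def J_def by auto
  have "finite C"
    using assms(1) unfolding C_def cmp_vertices_def cmp_parts_def by auto
  have C_eq: "C = \<Union>(A ` J)"
    unfolding A_def C_def J_def cmp_vertices_def by blast
  have "card C - card (A j) \<le> t" if j: "j \<in> J" for j
  proof -
    obtain u where "j < s" "u \<in> V j" "f u = i"
      using j unfolding J_def by blast
    then have "card (C - V j) \<le> t"
      using card_colour_class_Diff_part_le[OF assms(1,2)] unfolding C_def by blast
    then show ?thesis
      using \<open>finite C\<close> by (simp add: A_def card_Diff_subset_Int)
  qed
  then have "(\<Sum>j\<in>J. card C - card (A j)) \<le> r * t"
    using sum_bounded_above[of J "\<lambda>j. card C - card (A j)" t] \<open>card J = r\<close> by simp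
  moreover have "(\<Sum>j\<in>J. card C - card (A j)) = (r - 1) * card C"
  proof -
    have "\<And>j k. j \<in> J \<Longrightarrow> k \<in> J \<Longrightarrow> j \<noteq> k \<Longrightarrow> A j \<inter> A k = {}"
      using assms(1) unfolding A_def J_def cmp_parts_def by blast
    moreover have "\<And>j. finite (A j)"
      using \<open>finite C\<close> unfolding A_def by blast
    ultimately show ?thesis
      using sum_card_UN_diff_card[of J A] \<open>finite J\<close> \<open>card J = r\<close> unfolding C_eq by simp
  qed
  ultimately show ?thesis
    unfolding C_def by simp
qed

theorem lemma2p1:
  fixes s t r :: nat and V :: "nat \<Rightarrow> 'a set" and f :: "'a \<Rightarrow> 'c" and i :: 'c
  assumes "t \<ge> 1" and "s \<ge> 2"
    and "cmp_parts s V"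
    and "relaxed_coloring (cmp_vertices s V) (cmp_adj s V) t f"
    and "card {j. j < s \<and> (\<exists>v\<in>V j. f v = i)} = r"
    and "r \<ge> 2"
  shows "card {v \<in> cmp_vertices s V. f v = i} \<le> t + t div (r - 1)"
  using le_add_div_if_pred_mult_le[OF assms(6)] colour_class_card_bound[OF assms(3,4), of i]
  unfolding assms(5) .

end
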